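(* Let $d\ge2$. There is a constant $C_d\ge 2$ depending only on $d$ such that the following holds. Let $z\in\mathbb{R}^d_+$ and $r\ge C_d$, put $z_0=\sum_{j=1}^d z_j$ and $b=z_0-r$, and assume $b> C_d$. Let $D=\{y\in\mathbb{R}^d_+:|z-y|_1<r\}$ and let $\xi\in D$, $\xi_0=\sum_j\xi_j$. Then for each $t\in(b,b+2r)$ there exists a $(d-1)$-dimensional parallelepiped $P_t\subset\Pi_t$, all of whose edges are parallel to vectors in $V$, which contains $D_t=D\cap\Pi_t$ and contains $\xi_t$, and satisfies $$\lambda_t(P_t)\le C\,\big[1+(t-b)\vee(\xi_0-b)\big]^{d-1}\,e^{b}\,\mu(D),$$ where $C>0$ depends only on $d$.
   Context: $\mathbb{R}^d_+=(0,\infty)^d$; $\mu$ is the measure on $\mathbb{R}^d_+$ with density $\exp(-|x|_1)$, $|x|_1=\sum_i|x_i|$. For $t\in\mathbb{R}$, $\Pi_t=\{x\in\mathbb{R}^d:\sum_j x_j=t\}$, $\lambda_t$ is $(d-1)$-dimensional Lebesgue measure on $\Pi_t$, and $\xi_t$ is the orthogonal projection of $\xi$ onto $\Pi_t$. $V$ is the set of vectors obtained by permuting the coordinates of $(1,-1,0,\dots,0)\in\mathbb{R}^d$. $a\vee b=\max(a,b)$. *)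

theory Defs
  imports "HOL-Analysis.Analysis"
begin

text \<open>Points of R^d are vectors of type real^'n, d = CARD('n).\<close>

definition norm1 :: "real^'n \<Rightarrow> real" where
  "norm1 x = (\<Sum>i\<in>UNIV. \<bar>x $ i\<bar>)"

definition coord_sum :: "real^'n \<Rightarrow> real" where
  "coord_sum x = (\<Sum>i\<in>UNIV. x $ i)"

definition pos_orthant :: "(real^'n) set" where
  "pos_orthant = {x. \<forall>i. 0 < x $ i}"

definition mu :: "(real^'n) set \<Rightarrow> ennreal" where
  "mu A = (\<integral>\<^sup>+ x. ennreal (exp (- norm1 x)) * indicator (A \<inter> pos_orthant) x \<partial>lebesgue)"

definition hplane :: "real \<Rightarrow> (real^'n) set" where
  "hplane t = {x. coord_sum x = t}"

definition ones :: "real^'n" where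
  "ones = (\<chi> i. 1)"

definition hnormal :: "real^'n" where
  "hnormal = (1 / sqrt (real CARD('n))) *\<^sub>R ones"

text \<open>(d-1)-dimensional Lebesgue measure lambda_t on Pi_t: for A \<subseteq> Pi_t,
  lambda_t(A) equals the d-dimensional Lebesgue measure of the prism of unit
  height over A in the normal direction.\<close>
definition hmeasure :: "(real^'n) set \<Rightarrow> ennreal" where
  "hmeasure A = emeasure lebesgue {x + s *\<^sub>R hnormal | x s. x \<in> A \<and> s \<in> {0..1}}"

text \<open>Orthogonal projection of xi onto Pi_t.\<close>
definition hproj :: "real \<Rightarrow> real^'n \<Rightarrow> real^'n" where
  "hproj t \<xi> = \<xi> - ((coord_sum \<xi> - t) / real CARD('n)) *\<^sub>R ones"

definition Vset :: "(real^'n) set" where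
  "Vset = {v. \<exists>i j. i \<noteq> j \<and> v = (\<chi> k. if k = i then 1 else if k = j then -1 else 0)}"

definition parallelepiped :: "real^'n \<Rightarrow> (nat \<Rightarrow> real^'n) \<Rightarrow> nat \<Rightarrow> (real^'n) set" where
  "parallelepiped p e k =
     {p + (\<Sum>i<k. s i *\<^sub>R e i) | s. \<forall>i<k. 0 \<le> s i \<and> s i \<le> 1}"

definition V_parallelepiped :: "(real^'n) set \<Rightarrow> bool" where
  "V_parallelepiped P \<longleftrightarrow>
     (\<exists>p e. P = parallelepiped p e (CARD('n) - 1)
        \<and> inj_on e {..<CARD('n) - 1}
        \<and> independent (e ` {..<CARD('n) - 1})
        \<and> (\<forall>i<CARD('n) - 1. \<exists>v\<in>Vset. \<exists>c. e i = c *\<^sub>R v))"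

end

theory Submission
  imports Defs
begin

(* Choose m with z_m maximal and put l_i = min(z_i, b, r). Every y in D satisfies
   max(0, z_i - r) < y_i < max(0, z_i - r) + l_i + (y_0 - b), so D_t and xi_t lie in the
   set P_t of points of Pi_t whose coordinates i <> m range over intervals of length
   l_i + 3M, where M = (t - b) v (xi_0 - b); P_t is a parallelepiped with edges along the
   vectors e_i - e_m of V. Conversely, D contains a set of the same shape, with side lengths
   (l_i + 1)/(4d) and coordinate sum in [b + 1, b + 2], on which the density of mu is at
   least e^-(b+2); there is room for it because z_m >= z_0/d > 4. The two volumes compare
   factor by factor: l_i + 3M + 1 <= 3 (1 + M) (l_i + 1). *)

lemma coord_sum_add: "coord_sum (x + y) = coord_sum x + coord_sum (y::real^'n)"
  by (simp add: coord_sum_def sum.distrib)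

lemma coord_sum_diff: "coord_sum (x - y) = coord_sum x - coord_sum (y::real^'n)"
  by (simp add: coord_sum_def sum_subtractf)

lemma coord_sum_scaleR: "coord_sum (c *\<^sub>R x) = c * coord_sum (x::real^'n)"
  by (simp add: coord_sum_def sum_distrib_left)

lemma coord_sum_sum: "coord_sum (\<Sum>j\<in>A. f j) = (\<Sum>j\<in>A. coord_sum (f j :: real^'n))"
  by (simp add: coord_sum_def sum.swap[of _ UNIV])

lemma coord_sum_axis: "coord_sum (axis i 1 :: real^'n) = 1"
  by (simp add: coord_sum_def axis_def)

lemma ones_nth [simp]: "(ones :: real^'n) $ i = 1"
  by (simp add: ones_def)

lemma coord_sum_ones: "coord_sum (ones :: real^'n) = real CARD('n)"
  by (simp add: coord_sum_def)

lemma hnormal_nth: "(hnormal :: real^'n) $ i = 1 / sqrt (real CARD('n))"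
  by (simp add: hnormal_def)

lemma coord_sum_hnormal: "coord_sum (hnormal :: real^'n) = sqrt (real CARD('n))"
  by (simp add: hnormal_def coord_sum_scaleR coord_sum_ones real_div_sqrt)

lemma coord_sum_remove: "coord_sum (x::real^'n) = x $ m + (\<Sum>i\<in>UNIV-{m}. x $ i)"
  unfolding coord_sum_def by (simp add: sum.remove)

lemma norm1_remove: "norm1 (x::real^'n) = \<bar>x $ m\<bar> + (\<Sum>i\<in>UNIV-{m}. \<bar>x $ i\<bar>)"
  unfolding norm1_def by (simp add: sum.remove)

lemma norm1_eq_coord_sum: "x \<in> pos_orthant \<Longrightarrow> norm1 x = coord_sum x"
  by (simp add: pos_orthant_def norm1_def coord_sum_def abs_of_pos)

lemma sum_const_UNIV_remove: "(\<Sum>i\<in>UNIV-{m::'n::finite}. c) = (real CARD('n) - 1) * c"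
  by (simp add: card_Diff_singleton Suc_leI)

lemma vec_eq_by_coord_sum:
  fixes x y :: "real^'n"
  assumes "coord_sum x = coord_sum y" and "\<And>i. i \<noteq> m \<Longrightarrow> x $ i = y $ i"
  shows "x = y"
proof -
  have "(\<Sum>i\<in>UNIV-{m}. x $ i) = (\<Sum>i\<in>UNIV-{m}. y $ i)"
    using assms(2) by (intro sum.cong) auto
  then have "x $ m = y $ m"
    using assms(1) coord_sum_remove[of x m] coord_sum_remove[of y m] by simp
  then show ?thesis
    using assms(2) by (metis vec_eq_iff)
qed

definition sum_box :: "'n::finite \<Rightarrow> ('n \<Rightarrow> real) \<Rightarrow> ('n \<Rightarrow> real) \<Rightarrow> real \<Rightarrow> real \<Rightarrow> (real^'n) set" where
  "sum_box m \<alpha> w c c' =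
     {x. (\<forall>i. i \<noteq> m \<longrightarrow> \<alpha> i \<le> x $ i \<and> x $ i \<le> \<alpha> i + w i) \<and> c \<le> coord_sum x \<and> coord_sum x \<le> c'}"

lemma sum_box_borel [measurable]: "sum_box m \<alpha> w c c' \<in> sets borel"
proof -
  have "sum_box m \<alpha> w c c' = {x \<in> space borel. (\<forall>i\<in>UNIV - {m}. \<alpha> i \<le> x $ i \<and> x $ i \<le> \<alpha> i + w i)
          \<and> c \<le> (\<Sum>i\<in>UNIV. x $ i) \<and> (\<Sum>i\<in>UNIV. x $ i) \<le> c'}"
    by (auto simp: sum_box_def coord_sum_def)
  also have "\<dots> \<in> sets borel"
    by measurable
  finally show ?thesis .
qed

lemma emeasure_PiM_box_sum_slab:
  fixes A :: "'a set" and lo hi :: "'a \<Rightarrow> real"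
  assumes fin: "finite A" and m: "m \<notin> A" and lo_hi: "\<And>i. i \<in> A \<Longrightarrow> lo i \<le> hi i" and "c \<le> c'"
  shows "emeasure (Pi\<^sub>M (insert m A) (\<lambda>_. lborel))
     ({f. (\<forall>i\<in>A. lo i \<le> f i \<and> f i \<le> hi i) \<and> c \<le> sum f (insert m A) \<and> sum f (insert m A) \<le> c'}
        \<inter> space (Pi\<^sub>M (insert m A) (\<lambda>_. lborel)))
     = ennreal ((\<Prod>i\<in>A. hi i - lo i) * (c' - c))"
proof -
  interpret product_sigma_finite "\<lambda>_. lborel" by standard
  let ?M = "\<lambda>A. Pi\<^sub>M A (\<lambda>_::'a. lborel)"
  let ?S = "{f. (\<forall>i\<in>A. lo i \<le> f i \<and> f i \<le> hi i) \<and> c \<le> sum f (insert m A) \<and> sum f (insert m A) \<le> c'}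
        \<inter> space (?M (insert m A))"
  let ?B = "Pi\<^sub>E A (\<lambda>i. {lo i..hi i})"
  have meas: "?S \<in> sets (?M (insert m A))"
  proof -
    have "?S = {f \<in> space (?M (insert m A)). (\<forall>i\<in>A. lo i \<le> f i \<and> f i \<le> hi i)
                  \<and> c \<le> sum f (insert m A) \<and> sum f (insert m A) \<le> c'}"
      by auto
    also have "\<dots> \<in> sets (?M (insert m A))"
      using fin by measurable
    finally show ?thesis .
  qed
  have "emeasure (?M (insert m A)) ?S = (\<integral>\<^sup>+ x. (\<integral>\<^sup>+ y. indicator ?S (x(m := y)) \<partial>lborel) \<partial>?M A)"
    using meas fin m by (simp add: product_nn_integral_insert[symmetric])
  also have "\<dots> = (\<integral>\<^sup>+ x. (\<integral>\<^sup>+ y. indicator ?B x * indicator {c - sum x A..c' - sum x A} y \<partial>lborel) \<partial>?M A)"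
  proof (intro nn_integral_cong)
    fix x :: "'a \<Rightarrow> real" and y :: real
    assume x: "x \<in> space (?M A)"
    have "sum (x(m := y)) (insert m A) = y + sum x A"
      using fin m by (simp add: sum.insert) (intro sum.cong, auto)
    moreover have "x(m := y) \<in> space (?M (insert m A))" and "x \<in> extensional A"
      using x by (auto simp: space_PiM PiE_def extensional_def)
    ultimately show "indicator ?S (x(m := y))
        = indicator ?B x * (indicator {c - sum x A..c' - sum x A} y :: ennreal)"
      using m by (auto simp: indicator_def PiE_def Pi_def)
  qed
  also have "\<dots> = (\<integral>\<^sup>+ x. indicator ?B x * ennreal (c' - c) \<partial>?M A)"
    using \<open>c \<le> c'\<close> by (intro nn_integral_cong) (simp add: nn_integral_cmult_indicator)
  also have "\<dots> = ennreal (c' - c) * emeasure (?M A) ?B"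
    using fin by (subst nn_integral_multc) (auto simp: mult.commute)
  also have "emeasure (?M A) ?B = ennreal (\<Prod>i\<in>A. hi i - lo i)"
    using fin lo_hi by (subst emeasure_PiM) (auto intro!: prod_ennreal)
  finally show ?thesis
    using \<open>c \<le> c'\<close> lo_hi by (simp add: ennreal_mult'[symmetric] mult.commute prod_nonneg)
qed

lemma inj_axis_one: "inj (\<lambda>i::'n::finite. axis i (1::real))"
  by (auto simp: inj_on_def axis_eq_axis)

lemma Basis_vec_eq_range_axis: "(Basis :: (real^'n::finite) set) = range (\<lambda>i. axis i 1)"
  by (auto simp: Basis_vec_def)

lemma sum_Basis_scaleR_nth: "(\<Sum>b\<in>Basis. f b *\<^sub>R b) $ i = f (axis i (1::real) :: real^'n::finite)"
proof -
  have "(\<Sum>b\<in>Basis. f b *\<^sub>R b) $ i = (\<Sum>j\<in>UNIV. f (axis j 1) * axis j 1 $ i)"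
    by (simp add: Basis_vec_eq_range_axis sum.reindex[OF inj_axis_one])
  also have "\<dots> = f (axis i 1)"
    by (simp add: axis_def if_distrib cong: if_cong)
  finally show ?thesis .
qed

lemma emeasure_sum_box:
  fixes m :: "'n::finite"
  assumes w: "\<And>i. i \<noteq> m \<Longrightarrow> 0 \<le> w i" and "c \<le> c'"
  shows "emeasure lebesgue (sum_box m \<alpha> w c c') = ennreal ((\<Prod>i\<in>UNIV-{m}. w i) * (c' - c))"
proof -
  let ?T = "sum_box m \<alpha> w c c'" and ?M = "Pi\<^sub>M Basis (\<lambda>_::real^'n. lborel)"
  let ?\<phi> = "\<lambda>f. \<Sum>b\<in>(Basis::(real^'n) set). f b *\<^sub>R b"
  let ?A = "(Basis::(real^'n) set) - {axis m 1}"
  define g where "g = inv_into UNIV (\<lambda>i::'n. axis i (1::real))"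
  have g: "g (axis i 1) = i" for i
    unfolding g_def by (rule inv_into_f_f[OF inj_axis_one]) simp
  have Basis_insert: "(Basis::(real^'n) set) = insert (axis m 1) ?A"
    by (auto simp: Basis_vec_eq_range_axis)
  have "emeasure lebesgue ?T = emeasure (distr ?M borel ?\<phi>) ?T"
    by (simp add: lborel_eq[symmetric])
  also have "\<dots> = emeasure ?M (?\<phi> -` ?T \<inter> space ?M)"
    by (subst emeasure_distr) auto
  also have "?\<phi> -` ?T \<inter> space ?M =
     {f. (\<forall>b\<in>?A. \<alpha> (g b) \<le> f b \<and> f b \<le> \<alpha> (g b) + w (g b)) \<and> c \<le> sum f Basis \<and> sum f Basis \<le> c'}
       \<inter> space ?M"
  proof -
    have coord_sum_\<phi>: "coord_sum (?\<phi> f) = sum f Basis" for f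
      by (simp only: coord_sum_def sum_Basis_scaleR_nth)
         (simp add: Basis_vec_eq_range_axis sum.reindex[OF inj_axis_one])
    have box_\<phi>: "(\<forall>i. i \<noteq> m \<longrightarrow> P i (?\<phi> f $ i)) \<longleftrightarrow> (\<forall>b\<in>?A. P (g b) (f b))" for P f
      by (simp only: sum_Basis_scaleR_nth)
         (force simp: Basis_vec_eq_range_axis g axis_eq_axis)
    show ?thesis
      unfolding sum_box_def vimage_def mem_Collect_eq coord_sum_\<phi>
        box_\<phi>[of "\<lambda>i v. \<alpha> i \<le> v \<and> v \<le> \<alpha> i + w i"] ..
  qed
  also have "emeasure ?M \<dots> = ennreal ((\<Prod>b\<in>?A. \<alpha> (g b) + w (g b) - \<alpha> (g b)) * (c' - c))"
    by (subst (1 2 3 4) Basis_insert, rule emeasure_PiM_box_sum_slab)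
       (use w \<open>c \<le> c'\<close> in \<open>auto simp: Basis_vec_eq_range_axis g axis_eq_axis\<close>)
  also have "(\<Prod>b\<in>?A. \<alpha> (g b) + w (g b) - \<alpha> (g b)) = (\<Prod>i\<in>UNIV-{m}. w i)"
  proof -
    have "?A = (\<lambda>i. axis i 1) ` (UNIV - {m})"
      by (auto simp: Basis_vec_eq_range_axis axis_eq_axis)
    then show ?thesis
      by (simp add: prod.reindex inj_on_def axis_eq_axis g)
  qed
  finally show ?thesis .
qed

lemma parallelepiped_bij_betw:
  assumes k: "bij_betw k {..<n} I"
  shows "parallelepiped p (f \<circ> k) n = {p + (\<Sum>i\<in>I. s i *\<^sub>R f i) | s. \<forall>i\<in>I. 0 \<le> s i \<and> s i \<le> 1}"
proof -
  let ?k' = "inv_into {..<n} k"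
  have sum_k: "(\<Sum>j<n. s (k j) *\<^sub>R f (k j)) = (\<Sum>i\<in>I. s i *\<^sub>R f i)" for s
    using sum.reindex_bij_betw[OF k, of "\<lambda>i. s i *\<^sub>R f i"] .
  have k'_k: "?k' (k j) = j" if "j < n" for j
    using k that by (simp add: bij_betw_def inv_into_f_f)
  have k'_I: "i \<in> I \<Longrightarrow> ?k' i < n" for i
    using k by (metis bij_betw_def inv_into_into lessThan_iff)
  show ?thesis
  proof (intro set_eqI iffI)
    fix x assume "x \<in> parallelepiped p (f \<circ> k) n"
    then obtain s where s: "\<forall>j<n. 0 \<le> s j \<and> s j \<le> 1" and x: "x = p + (\<Sum>j<n. s j *\<^sub>R f (k j))"
      by (auto simp: parallelepiped_def)
    have "x = p + (\<Sum>i\<in>I. (s \<circ> ?k') i *\<^sub>R f i)"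
      unfolding x sum_k[symmetric] by (simp add: k'_k)
    then show "x \<in> {p + (\<Sum>i\<in>I. s i *\<^sub>R f i) | s. \<forall>i\<in>I. 0 \<le> s i \<and> s i \<le> 1}"
      using s k'_I by fastforce
  next
    fix x assume "x \<in> {p + (\<Sum>i\<in>I. s i *\<^sub>R f i) | s. \<forall>i\<in>I. 0 \<le> s i \<and> s i \<le> 1}"
    then obtain s where s: "\<forall>i\<in>I. 0 \<le> s i \<and> s i \<le> 1" and x: "x = p + (\<Sum>i\<in>I. s i *\<^sub>R f i)"
      by blast
    have "\<forall>j<n. 0 \<le> (s \<circ> k) j \<and> (s \<circ> k) j \<le> 1"
      using s k by (auto simp: bij_betw_def)
    then show "x \<in> parallelepiped p (f \<circ> k) n"
      unfolding parallelepiped_def x sum_k[symmetric] by fastforce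
  qed
qed

lemma sum_axis_diff_nth:
  fixes m q :: "'n::finite"
  assumes "q \<noteq> m"
  shows "(\<Sum>i\<in>UNIV-{m}. c i *\<^sub>R (axis i 1 - axis m 1) :: real^'n) $ q = c q"
  using assms by (simp add: sum_component axis_def if_distrib[of "times _"] cong: if_cong)

lemma coord_sum_sum_axis_diff:
  "coord_sum (\<Sum>i\<in>A. c i *\<^sub>R (axis i 1 - axis m 1) :: real^'n) = 0"
  by (simp add: coord_sum_sum coord_sum_scaleR coord_sum_diff coord_sum_axis)

lemma sum_box_section_eq:
  fixes m :: "'n::finite" and \<alpha> W :: "'n \<Rightarrow> real" and t :: real
  assumes W: "\<And>i. i \<noteq> m \<Longrightarrow> 0 < W i"
  defines "p \<equiv> (\<chi> i. if i = m then t - (\<Sum>j\<in>UNIV-{m}. \<alpha> j) else \<alpha> i) :: real^'n"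
  shows "sum_box m \<alpha> W t t =
    {p + (\<Sum>i\<in>UNIV-{m}. s i *\<^sub>R (W i *\<^sub>R (axis i 1 - axis m 1))) | s. \<forall>i\<in>UNIV-{m}. 0 \<le> s i \<and> s i \<le> 1}"
proof -
  let ?x = "\<lambda>s. p + (\<Sum>i\<in>UNIV-{m}. s i *\<^sub>R (W i *\<^sub>R (axis i 1 - axis m 1)) :: real^'n)"
  have "coord_sum p = t"
    unfolding coord_sum_remove[of p m] by (simp add: p_def)
  then have coord_sum_x: "coord_sum (?x s) = t" for s
    by (simp add: coord_sum_add coord_sum_sum_axis_diff)
  have x_nth: "?x s $ q = \<alpha> q + s q * W q" if "q \<noteq> m" for s q
    using sum_axis_diff_nth[OF that, of "\<lambda>i. s i * W i"] that by (simp add: p_def)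
  show ?thesis
  proof (intro set_eqI iffI)
    fix y assume y: "y \<in> sum_box m \<alpha> W t t"
    define s where "s i = (y $ i - \<alpha> i) / W i" for i
    have "?x s = y"
    proof (rule vec_eq_by_coord_sum[of _ _ m])
      show "coord_sum (?x s) = coord_sum y"
        using y by (simp only: coord_sum_x) (simp add: sum_box_def)
      show "?x s $ i = y $ i" if "i \<noteq> m" for i
        using W[OF that] by (simp only: x_nth[OF that]) (simp add: s_def)
    qed
    moreover have "\<forall>i\<in>UNIV-{m}. 0 \<le> s i \<and> s i \<le> 1"
      using y W by (auto simp: sum_box_def s_def divide_simps)
    ultimately show "y \<in> {?x s | s. \<forall>i\<in>UNIV-{m}. 0 \<le> s i \<and> s i \<le> 1}"
      by blast
  next
    fix y assume "y \<in> {?x s | s. \<forall>i\<in>UNIV-{m}. 0 \<le> s i \<and> s i \<le> 1}"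
    then obtain s where s: "\<forall>i\<in>UNIV-{m}. 0 \<le> s i \<and> s i \<le> 1" and y: "y = ?x s"
      by blast
    have "\<alpha> i \<le> y $ i \<and> y $ i \<le> \<alpha> i + W i" if "i \<noteq> m" for i
      using s that W[OF that] unfolding y x_nth[OF that] by (simp add: mult_left_le_one_le)
    moreover have "coord_sum y = t"
      unfolding y by (rule coord_sum_x)
    ultimately show "y \<in> sum_box m \<alpha> W t t"
      by (simp add: sum_box_def)
  qed
qed

lemma independent_scaled_axis_diffs:
  fixes m :: "'n::finite"
  assumes W: "\<And>i. i \<noteq> m \<Longrightarrow> W i \<noteq> 0"
  defines "e \<equiv> \<lambda>i. W i *\<^sub>R (axis i 1 - axis m 1) :: real^'n"
  shows "inj_on e (UNIV - {m})" and "independent (e ` (UNIV - {m}))"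
proof -
  have e_nth: "e j $ q = (if q = j then W j else 0)" if "q \<noteq> m" for j q
    using that by (simp add: e_def axis_def)
  show inj: "inj_on e (UNIV - {m})"
  proof (rule inj_onI)
    fix i j assume i: "i \<in> UNIV - {m}" and "j \<in> UNIV - {m}" and "e i = e j"
    then have "e j $ i \<noteq> 0"
      using e_nth[of i i] W[of i] by simp
    then show "i = j"
      using e_nth[of i j] i by (simp split: if_splits)
  qed
  show "independent (e ` (UNIV - {m}))"
  proof (rule independent_if_scalars_zero)
    fix c x assume sum0: "(\<Sum>x\<in>e ` (UNIV - {m}). c x *\<^sub>R x) = 0" and "x \<in> e ` (UNIV - {m})"
    then obtain j where j: "j \<noteq> m" and x: "x = e j"
      by auto
    have "(\<Sum>x\<in>e ` (UNIV - {m}). c x *\<^sub>R x) $ j = (\<Sum>i\<in>UNIV - {m}. c (e i) * e i $ j)"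
      by (simp add: sum.reindex[OF inj])
    also have "\<dots> = c x * W j"
      using j by (simp add: e_nth x if_distrib[of "times _"] cong: if_cong)
    finally show "c x = 0"
      using sum0 W[OF j] by simp
  qed simp
qed

lemma axis_diff_in_Vset: "i \<noteq> j \<Longrightarrow> (axis i 1 - axis j 1 :: real^'n) \<in> Vset"
  unfolding Vset_def by (intro CollectI exI[of _ i] exI[of _ j]) (auto simp: vec_eq_iff axis_def)

lemma V_parallelepiped_sum_box_section:
  fixes m :: "'n::finite"
  assumes W: "\<And>i. i \<noteq> m \<Longrightarrow> 0 < W i"
  shows "V_parallelepiped (sum_box m \<alpha> W t t)"
proof -
  let ?n = "CARD('n) - 1"
  define e :: "'n \<Rightarrow> real^'n" where "e = (\<lambda>i. W i *\<^sub>R (axis i 1 - axis m 1))"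
  obtain k where k: "bij_betw k {..<?n} (UNIV - {m})"
    using ex_bij_betw_nat_finite[of "UNIV - {m}"] by (auto simp: atLeast0LessThan card_Diff_singleton)
  have k_ne: "k j \<noteq> m" if "j < ?n" for j
    using k that by (auto simp: bij_betw_def)
  have "\<And>i. i \<noteq> m \<Longrightarrow> W i \<noteq> 0"
    using W by force
  note e_indep = independent_scaled_axis_diffs[of m W, OF this, folded e_def]
  have "sum_box m \<alpha> W t t
      = parallelepiped (\<chi> i. if i = m then t - (\<Sum>j\<in>UNIV-{m}. \<alpha> j) else \<alpha> i) (e \<circ> k) ?n"
    unfolding parallelepiped_bij_betw[OF k] e_def by (rule sum_box_section_eq[OF W])
  moreover have "inj_on (e \<circ> k) {..<?n}"
    using k e_indep(1) by (simp add: bij_betw_def comp_inj_on)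
  moreover have "independent ((e \<circ> k) ` {..<?n})"
    using k e_indep(2) by (metis bij_betw_imp_surj_on image_comp)
  moreover have "\<forall>j<?n. \<exists>v\<in>Vset. \<exists>c. (e \<circ> k) j = c *\<^sub>R v"
    using axis_diff_in_Vset[OF k_ne] by (auto simp: e_def)
  ultimately show ?thesis
    unfolding V_parallelepiped_def by blast
qed

lemma hmeasure_sum_box_section_le:
  fixes m :: "'n::finite"
  assumes W: "\<And>i. i \<noteq> m \<Longrightarrow> 0 \<le> W i"
  shows "hmeasure (sum_box m \<alpha> W t t) \<le> ennreal (sqrt (real CARD('n)) * (\<Prod>i\<in>UNIV-{m}. W i + 1))"
proof -
  let ?d = "sqrt (real CARD('n))"
  have d: "1 \<le> ?d"
    by simp
  have "{x + s *\<^sub>R hnormal | x s. x \<in> sum_box m \<alpha> W t t \<and> s \<in> {0..1}}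
          \<subseteq> sum_box m \<alpha> (\<lambda>i. W i + 1) t (t + ?d)"
  proof clarify
    fix x and s :: real
    assume x: "x \<in> sum_box m \<alpha> W t t" and s: "s \<in> {0..1}"
    have s_d: "0 \<le> s / ?d" "s / ?d \<le> 1" "s * ?d \<le> ?d"
      using s d order_trans[of s 1 ?d] by (auto simp: divide_le_eq mult_left_le_one_le)
    have "\<alpha> i \<le> (x + s *\<^sub>R hnormal) $ i \<and> (x + s *\<^sub>R hnormal) $ i \<le> \<alpha> i + (W i + 1)" if "i \<noteq> m" for i
    proof -
      have "\<alpha> i \<le> x $ i" "x $ i \<le> \<alpha> i + W i"
        using x that by (auto simp: sum_box_def)
      moreover have "(x + s *\<^sub>R hnormal) $ i = x $ i + s / ?d"
        by (simp add: hnormal_nth)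
      ultimately show ?thesis
        using s_d by linarith
    qed
    moreover have "coord_sum (x + s *\<^sub>R hnormal) = t + s * ?d"
      using x by (simp add: sum_box_def coord_sum_add coord_sum_scaleR coord_sum_hnormal)
    ultimately show "x + s *\<^sub>R hnormal \<in> sum_box m \<alpha> (\<lambda>i. W i + 1) t (t + ?d)"
      using s s_d by (simp add: sum_box_def)
  qed
  then have "hmeasure (sum_box m \<alpha> W t t) \<le> emeasure lebesgue (sum_box m \<alpha> (\<lambda>i. W i + 1) t (t + ?d))"
    unfolding hmeasure_def by (intro emeasure_mono) auto
  also have "\<dots> = ennreal (?d * (\<Prod>i\<in>UNIV-{m}. W i + 1))"
    using W by (subst emeasure_sum_box) (auto simp: mult.commute)
  finally show ?thesis .
qed

definition orthant_ball :: "real^'n \<Rightarrow> real \<Rightarrow> (real^'n) set" where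
  "orthant_ball z r = {y \<in> pos_orthant. norm1 (z - y) < r}"

lemma abs_nth_le_norm1: "\<bar>x $ i\<bar> \<le> norm1 (x::real^'n)"
  unfolding norm1_def by (rule member_le_sum) auto

lemma coord_sum_le_norm1: "coord_sum x \<le> norm1 (x::real^'n)"
  unfolding norm1_def coord_sum_def by (rule sum_mono) simp

lemma coord_sum_minus_twice_nth_le_norm1: "coord_sum x - 2 * x $ i \<le> norm1 (x::real^'n)"
proof -
  have "(\<Sum>j\<in>UNIV-{i}. x $ j) \<le> (\<Sum>j\<in>UNIV-{i}. \<bar>x $ j\<bar>)"
    by (rule sum_mono) simp
  then show ?thesis
    using coord_sum_remove[of x i] norm1_remove[of x i] abs_ge_minus_self[of "x $ i"] by linarith
qed

lemma UNIV_remove_nonempty: "CARD('n::finite) \<ge> 2 \<Longrightarrow> UNIV - {m::'n} \<noteq> {}"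
  using card_Diff_singleton[of m UNIV] by force

lemma nth_lt_coord_sum:
  fixes x :: "real^'n"
  assumes "CARD('n) \<ge> 2" and "x \<in> pos_orthant"
  shows "x $ i < coord_sum x"
proof -
  have "UNIV - {i} \<noteq> {}"
    using assms(1) by (rule UNIV_remove_nonempty)
  then have "0 < (\<Sum>j\<in>UNIV-{i}. x $ j)"
    using assms(2) by (intro sum_pos) (auto simp: pos_orthant_def)
  then show ?thesis
    using coord_sum_remove[of x i] by linarith
qed

lemma orthant_ball_coord_sum_gt:
  "y \<in> orthant_ball z r \<Longrightarrow> coord_sum z - r < coord_sum y"
  using coord_sum_le_norm1[of "z - y"] by (simp add: orthant_ball_def coord_sum_diff)

lemma orthant_ball_nth_gt:
  "y \<in> orthant_ball z r \<Longrightarrow> max 0 (z $ i - r) < y $ i"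
  using abs_nth_le_norm1[of "z - y" i] by (auto simp: orthant_ball_def pos_orthant_def)

lemma orthant_ball_nth_lt:
  fixes y z :: "real^'n"
  assumes "CARD('n) \<ge> 2" and y: "y \<in> orthant_ball z r"
  defines "b \<equiv> coord_sum z - r"
  shows "y $ i < max 0 (z $ i - r) + min (z $ i) (min b r) + (coord_sum y - b)"
proof -
  have "y $ i < coord_sum y"
    using assms(1) y by (intro nth_lt_coord_sum) (auto simp: orthant_ball_def)
  moreover have "2 * (y $ i - z $ i) < coord_sum y - b"
    using coord_sum_minus_twice_nth_le_norm1[of "z - y" i] y
    by (simp add: orthant_ball_def coord_sum_diff b_def)
  moreover have "b < coord_sum y"
    using orthant_ball_coord_sum_gt[OF y] by (simp add: b_def)
  ultimately show ?thesis
    by (auto simp: min_def max_def)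
qed

lemma coord_sum_hproj: "coord_sum (hproj t \<xi>) = t"
  by (simp add: hproj_def coord_sum_diff coord_sum_scaleR coord_sum_ones)

lemma hproj_nth: "hproj t (\<xi>::real^'n) $ i = \<xi> $ i - (coord_sum \<xi> - t) / real CARD('n)"
  by (simp add: hproj_def)

definition cover_box :: "real^'n \<Rightarrow> real \<Rightarrow> real \<Rightarrow> 'n \<Rightarrow> real \<Rightarrow> (real^'n) set" where
  "cover_box z r M m t =
     sum_box m (\<lambda>i. max 0 (z $ i - r) - M) (\<lambda>i. min (z $ i) (min (coord_sum z - r) r) + 3 * M) t t"

lemma orthant_ball_section_subset_cover_box:
  fixes z :: "real^'n"
  assumes "CARD('n) \<ge> 2" and M: "t - (coord_sum z - r) \<le> M" "0 \<le> M"
  shows "orthant_ball z r \<inter> hplane t \<subseteq> cover_box z r M m (t::real)"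
proof
  fix y :: "real^'n" assume "y \<in> orthant_ball z r \<inter> hplane t"
  then have y: "y \<in> orthant_ball z r" and "coord_sum y = t"
    by (simp_all add: hplane_def)
  then have "max 0 (z $ i - r) - M \<le> y $ i \<and>
      y $ i \<le> max 0 (z $ i - r) - M + (min (z $ i) (min (coord_sum z - r) r) + 3 * M)" for i
    using orthant_ball_nth_gt[OF y, of i] orthant_ball_nth_lt[OF assms(1) y, of i] M by linarith
  then show "y \<in> cover_box z r M m t"
    by (simp add: cover_box_def sum_box_def \<open>coord_sum y = t\<close>)
qed

lemma hproj_in_cover_box:
  fixes z \<xi> :: "real^'n"
  assumes "CARD('n) \<ge> 2" and \<xi>: "\<xi> \<in> orthant_ball z r" and t: "coord_sum z - r < t"
    and M: "t - (coord_sum z - r) \<le> M" "coord_sum \<xi> - (coord_sum z - r) \<le> M"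
  shows "hproj t \<xi> \<in> cover_box z r M m t"
proof -
  let ?s = "(coord_sum \<xi> - t) / real CARD('n)"
  have "\<bar>coord_sum \<xi> - t\<bar> \<le> M"
    using M t orthant_ball_coord_sum_gt[OF \<xi>] by linarith
  moreover have "\<bar>?s\<bar> \<le> \<bar>coord_sum \<xi> - t\<bar>"
    using assms(1) by (simp add: abs_divide divide_le_eq mult_le_cancel_left1)
  ultimately have "\<bar>?s\<bar> \<le> M"
    by linarith
  then have "max 0 (z $ i - r) - M \<le> \<xi> $ i - ?s \<and>
      \<xi> $ i - ?s \<le> max 0 (z $ i - r) - M + (min (z $ i) (min (coord_sum z - r) r) + 3 * M)" for i
    using orthant_ball_nth_gt[OF \<xi>, of i] orthant_ball_nth_lt[OF assms(1) \<xi>, of i] M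
    unfolding abs_le_iff by linarith
  then show ?thesis
    by (simp add: cover_box_def sum_box_def coord_sum_hproj hproj_nth)
qed

lemma mu_ge_exp_emeasure:
  assumes "R \<in> sets lebesgue" and "R \<subseteq> A \<inter> pos_orthant" and "\<And>x. x \<in> R \<Longrightarrow> norm1 x \<le> c"
  shows "ennreal (exp (- c)) * emeasure lebesgue R \<le> mu A"
proof -
  have "ennreal (exp (- c)) * emeasure lebesgue R
      = (\<integral>\<^sup>+ x. ennreal (exp (- c)) * indicator R x \<partial>lebesgue)"
    using assms(1) by (simp add: nn_integral_cmult_indicator)
  also have "\<dots> \<le> mu A"
    unfolding mu_def using assms(2,3) by (intro nn_integral_mono) (auto simp: indicator_def)
  finally show ?thesis .
qed

lemma exists_scaled_down_with_sum:
  fixes c :: "'a \<Rightarrow> real"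
  assumes "finite I" and c: "\<And>i. i \<in> I \<Longrightarrow> 0 < c i" and A: "0 < A" "A \<le> (\<Sum>i\<in>I. c i)"
  obtains a where "\<And>i. i \<in> I \<Longrightarrow> 0 < a i \<and> a i \<le> c i" and "(\<Sum>i\<in>I. a i) = A"
proof
  let ?\<theta> = "A / (\<Sum>i\<in>I. c i)"
  have "0 < ?\<theta>" "?\<theta> \<le> 1"
    using A by auto
  then show "0 < ?\<theta> * c i \<and> ?\<theta> * c i \<le> c i" if "i \<in> I" for i
    using c[OF that] mult_left_le_one_le[of "c i" ?\<theta>] by (simp del: times_divide_eq_left)
  show "(\<Sum>i\<in>I. ?\<theta> * c i) = A"
    using A by (simp only: sum_distrib_left[symmetric]) simp
qed

lemma sum_box_subset_orthant_ball:
  fixes z :: "real^'n" and m :: 'n and r :: real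
  defines "b \<equiv> coord_sum z - r" and "\<epsilon> \<equiv> 1 / (4 * real CARD('n))"
  assumes a: "\<And>i. i \<noteq> m \<Longrightarrow> 0 < a i \<and> 0 \<le> h i \<and> a i + h i \<le> z $ i + \<epsilon>"
    and lower: "b + 2 - z $ m \<le> (\<Sum>i\<in>UNIV-{m}. a i)"
    and upper: "(\<Sum>i\<in>UNIV-{m}. a i + h i) < b + 1"
  shows "sum_box m a h (b + 1) (b + 2) \<subseteq> orthant_ball z r"
proof
  fix x assume x: "x \<in> sum_box m a h (b + 1) (b + 2)"
  then have x_i: "a i \<le> x $ i \<and> x $ i \<le> a i + h i" if "i \<noteq> m" for i
    using that by (simp add: sum_box_def)
  have "(\<Sum>i\<in>UNIV-{m}. a i) \<le> (\<Sum>i\<in>UNIV-{m}. x $ i)" "(\<Sum>i\<in>UNIV-{m}. x $ i) \<le> (\<Sum>i\<in>UNIV-{m}. a i + h i)"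
    using x_i by (auto intro: sum_mono)
  then have x_m: "0 < x $ m" "x $ m \<le> z $ m"
    using x lower upper coord_sum_remove[of x m] by (auto simp: sum_box_def)
  have "0 < x $ i" for i
    using x_m(1) x_i[of i] a[of i] by (cases "i = m") auto
  then have "x \<in> pos_orthant"
    by (simp add: pos_orthant_def)
  have abs_i: "\<bar>z $ i - x $ i\<bar> \<le> (z $ i - x $ i) + 2 * \<epsilon>" if "i \<noteq> m" for i
    using x_i[OF that] a[OF that] by (simp add: abs_le_iff \<epsilon>_def)
  have "norm1 (z - x) = (z $ m - x $ m) + (\<Sum>i\<in>UNIV-{m}. \<bar>z $ i - x $ i\<bar>)"
    using norm1_remove[of "z - x" m] x_m by simp
  also have "\<dots> \<le> (z $ m - x $ m) + (\<Sum>i\<in>UNIV-{m}. (z $ i - x $ i) + 2 * \<epsilon>)"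
    using abs_i by (intro add_left_mono sum_mono) auto
  also have "\<dots> = coord_sum z - coord_sum x + (real CARD('n) - 1) * (2 * \<epsilon>)"
    using coord_sum_remove[of z m] coord_sum_remove[of x m]
    by (simp add: sum.distrib sum_subtractf sum_const_UNIV_remove)
  also have "(real CARD('n) - 1) * (2 * \<epsilon>) < 1"
    by (simp add: \<epsilon>_def field_simps)
  finally have "norm1 (z - x) < r"
    using x by (simp add: sum_box_def b_def)
  then show "x \<in> orthant_ball z r"
    using \<open>x \<in> pos_orthant\<close> by (simp add: orthant_ball_def)
qed

lemma four_sum_le:
  fixes f :: "'n::finite \<Rightarrow> real"
  assumes "\<And>i. i \<noteq> m \<Longrightarrow> f i \<le> X / (4 * real CARD('n))" and "0 \<le> X"
  shows "4 * (\<Sum>i\<in>UNIV-{m}. f i) \<le> X"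
proof -
  have "(\<Sum>i\<in>UNIV-{m}. f i) \<le> (\<Sum>i\<in>UNIV-{m}. X / (4 * real CARD('n)))"
    using assms(1) by (intro sum_mono) simp
  also have "\<dots> = (real CARD('n) - 1) / real CARD('n) * (X / 4)"
    by (simp add: sum_const_UNIV_remove)
  also have "\<dots> \<le> X / 4"
    using assms(2) by (intro mult_left_le_one_le) auto
  finally show ?thesis
    by simp
qed

lemma coord_sum_le_card_mult_max:
  "(\<And>i. x $ i \<le> x $ m) \<Longrightarrow> coord_sum x \<le> real CARD('n) * (x::real^'n) $ m"
  using sum_bounded_above[of UNIV "\<lambda>i. x $ i" "x $ m"] by (simp add: coord_sum_def)

lemma exists_between:
  fixes L U S :: real
  assumes "0 < S" "L \<le> S" "L < U" "0 < U"
  obtains A where "0 < A" "A \<le> S" "L \<le> A" "A < U"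
proof
  show "0 < max L (min S U / 2)" "max L (min S U / 2) \<le> S" "L \<le> max L (min S U / 2)"
    "max L (min S U / 2) < U"
    using assms by auto
qed

lemma exists_sum_box_subset_orthant_ball:
  fixes z :: "real^'n" and m :: 'n and r :: real and h :: "'n \<Rightarrow> real"
  defines "b \<equiv> coord_sum z - r" and "\<epsilon> \<equiv> 1 / (4 * real CARD('n))" and "H \<equiv> \<Sum>i\<in>UNIV-{m}. h i"
  assumes "CARD('n) \<ge> 2" and h: "\<And>i. i \<noteq> m \<Longrightarrow> 0 \<le> h i \<and> h i < z $ i + \<epsilon>"
    and H: "2 + H \<le> r" "H + 1 < z $ m" "H < b + 1"
  obtains a where "sum_box m a h (b + 1) (b + 2) \<subseteq> orthant_ball z r"
proof -
  define c where "c i = z $ i + \<epsilon> - h i" for i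
  have c_pos: "0 < c i" if "i \<in> UNIV - {m}" for i
    using h that by (simp add: c_def)
  then have S_pos: "0 < (\<Sum>i\<in>UNIV-{m}. c i)"
    using UNIV_remove_nonempty[OF assms(4)] by (intro sum_pos) auto
  have S_eq: "(\<Sum>i\<in>UNIV-{m}. c i) = b + r - z $ m + (real CARD('n) - 1) * \<epsilon> - H"
    using coord_sum_remove[of z m]
    by (simp add: c_def H_def b_def sum.distrib sum_subtractf sum_const_UNIV_remove)
  have "0 \<le> (real CARD('n) - 1) * \<epsilon>"
    by (simp add: \<epsilon>_def)
  obtain A where A: "0 < A" "A \<le> (\<Sum>i\<in>UNIV-{m}. c i)" "b + 2 - z $ m \<le> A" "A < b + 1 - H"
  proof (rule exists_between[OF S_pos])
    show "b + 2 - z $ m \<le> (\<Sum>i\<in>UNIV-{m}. c i)"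
      using S_eq \<open>0 \<le> (real CARD('n) - 1) * \<epsilon>\<close> H(1) by linarith
    show "b + 2 - z $ m < b + 1 - H" "0 < b + 1 - H"
      using H(2,3) by linarith+
  qed
  obtain a where a: "\<And>i. i \<in> UNIV - {m} \<Longrightarrow> 0 < a i \<and> a i \<le> c i" and sum_a: "(\<Sum>i\<in>UNIV-{m}. a i) = A"
    using exists_scaled_down_with_sum[of "UNIV - {m}" c A] c_pos A(1,2) by auto
  have "sum_box m a h (b + 1) (b + 2) \<subseteq> orthant_ball z r"
    unfolding b_def
  proof (rule sum_box_subset_orthant_ball)
    show "0 < a i \<and> 0 \<le> h i \<and> a i + h i \<le> z $ i + 1 / (4 * real CARD('n))" if "i \<noteq> m" for i
      using a[of i] h[OF that] that by (simp add: c_def \<epsilon>_def)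
    show "coord_sum z - r + 2 - z $ m \<le> (\<Sum>i\<in>UNIV-{m}. a i)"
      using A sum_a by (simp add: b_def)
    show "(\<Sum>i\<in>UNIV-{m}. a i + h i) < coord_sum z - r + 1"
      using A sum_a by (simp add: sum.distrib H_def[symmetric] b_def)
  qed
  then show thesis
    by (rule that)
qed

lemma orthant_ball_contains_sum_box:
  fixes z :: "real^'n" and m :: 'n and r :: real
  defines "b \<equiv> coord_sum z - r" and "d \<equiv> real CARD('n)"
  defines "h \<equiv> \<lambda>i. (min (z $ i) (min b r) + 1) / (4 * d)"
  assumes "CARD('n) \<ge> 2" and z: "z \<in> pos_orthant" and z_m: "\<And>i. z $ i \<le> z $ m"
    and r: "2 * d + 4 \<le> r" and b: "2 * d + 4 < b"
  obtains a where "sum_box m a h (b + 1) (b + 2) \<subseteq> orthant_ball z r"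
proof -
  define H where "H = (\<Sum>i\<in>UNIV-{m}. h i)"
  have d: "2 \<le> d"
    using assms(4) by (simp add: d_def)
  have z_pos: "0 < z $ i" for i
    using z by (simp add: pos_orthant_def)
  have H_le: "4 * H \<le> X" if "\<And>i. h i \<le> X / (4 * d)" and "0 \<le> X" for X
    unfolding H_def using that by (intro four_sum_le) (simp_all add: d_def)
  have "b + r \<le> d * z $ m"
    using coord_sum_le_card_mult_max[OF z_m] by (simp add: b_def d_def)
  then have "d * 4 < d * z $ m"
    using b r by linarith
  then have "4 < z $ m"
    using d by simp
  have "4 * H \<le> z $ m + 1"
  proof (rule H_le)
    show "h i \<le> (z $ m + 1) / (4 * d)" for i
      unfolding h_def by (intro divide_right_mono) (use z_m[of i] d in auto)
    show "0 \<le> z $ m + 1"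
      using z_pos[of m] by simp
  qed
  moreover have "4 * H \<le> b + 1" and "4 * H \<le> r + 1"
    using b r d by (intro H_le; auto intro!: divide_right_mono simp: h_def)+
  ultimately have H: "2 + H \<le> r" "H + 1 < z $ m" "H < coord_sum z - r + 1"
    using \<open>4 < z $ m\<close> b r d unfolding b_def by linarith+
  have "0 \<le> h i \<and> h i < z $ i + 1 / (4 * real CARD('n))" for i
  proof -
    have "h i \<le> z $ i / (4 * d) + 1 / (4 * d)"
      using d by (simp add: h_def add_divide_distrib[symmetric] divide_right_mono)
    moreover have "z $ i / (4 * d) < z $ i"
      using z_pos[of i] d by (simp add: divide_less_eq)
    ultimately show ?thesis
      using z_pos[of i] b r d by (simp add: h_def d_def[symmetric])
  qed
  then obtain a where "sum_box m a h (coord_sum z - r + 1) (coord_sum z - r + 2) \<subseteq> orthant_ball z r"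
    using exists_sum_box_subset_orthant_ball[OF assms(4), of m h z r] H unfolding H_def by blast
  then show thesis
    using that unfolding b_def by blast
qed

lemma mu_orthant_ball_ge:
  fixes z :: "real^'n" and m :: 'n and r :: real
  defines "b \<equiv> coord_sum z - r" and "d \<equiv> real CARD('n)"
  assumes "CARD('n) \<ge> 2" and "z \<in> pos_orthant" and "\<And>i. z $ i \<le> z $ m"
    and "2 * d + 4 \<le> r" and "2 * d + 4 < b"
  shows "ennreal (exp (- (b + 2)) * (\<Prod>i\<in>UNIV-{m}. (min (z $ i) (min b r) + 1) / (4 * d)))
           \<le> mu (orthant_ball z r)"
proof -
  let ?h = "\<lambda>i. (min (z $ i) (min b r) + 1) / (4 * d)"
  obtain a where R: "sum_box m a ?h (b + 1) (b + 2) \<subseteq> orthant_ball z r"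
    using orthant_ball_contains_sum_box[of z m r] assms unfolding b_def d_def by blast
  have h_nonneg: "0 \<le> ?h i" for i
  proof -
    have "0 < z $ i" "0 < b" "0 < r"
      using assms(4-7) by (auto simp: pos_orthant_def d_def)
    then show ?thesis
      by (simp add: d_def)
  qed
  have "ennreal (exp (- (b + 2)) * (\<Prod>i\<in>UNIV-{m}. ?h i))
      = ennreal (exp (- (b + 2))) * ennreal (\<Prod>i\<in>UNIV-{m}. ?h i)"
    using h_nonneg by (simp add: ennreal_mult prod_nonneg)
  also have "ennreal (\<Prod>i\<in>UNIV-{m}. ?h i) = emeasure lebesgue (sum_box m a ?h (b + 1) (b + 2))"
    using emeasure_sum_box[of m ?h "b + 1" "b + 2" a] h_nonneg by simp
  also have "ennreal (exp (- (b + 2))) * \<dots> \<le> mu (orthant_ball z r)"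
  proof (rule mu_ge_exp_emeasure)
    show "sum_box m a ?h (b + 1) (b + 2) \<subseteq> orthant_ball z r \<inter> pos_orthant"
      using R by (auto simp: orthant_ball_def)
    show "norm1 x \<le> b + 2" if "x \<in> sum_box m a ?h (b + 1) (b + 2)" for x
      using that R by (auto simp: orthant_ball_def sum_box_def norm1_eq_coord_sum)
  qed simp
  finally show ?thesis .
qed

lemma exists_max_nth:
  obtains m where "\<And>i. (x::real^'n) $ i \<le> x $ m"
proof -
  have "Max (range (($) x)) \<in> range (($) x)"
    by (rule Max_in) auto
  then obtain m where "Max (range (($) x)) = x $ m"
    by (metis rangeE)
  moreover have "x $ i \<le> Max (range (($) x))" for i
    by simp
  ultimately show thesis
    using that by metis
qed

lemma prod_shifted_le_prod_scaled:
  fixes l :: "'a \<Rightarrow> real"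
  assumes "\<And>i. i \<in> I \<Longrightarrow> 0 \<le> l i" and "0 \<le> M" and "0 < d"
  shows "(\<Prod>i\<in>I. l i + 3 * M + 1) \<le> (12 * d * (1 + M)) ^ card I * (\<Prod>i\<in>I. (l i + 1) / (4 * d))"
proof -
  have "(\<Prod>i\<in>I. l i + 3 * M + 1) \<le> (\<Prod>i\<in>I. 12 * d * (1 + M) * ((l i + 1) / (4 * d)))"
  proof (rule prod_mono)
    fix i assume "i \<in> I"
    have "12 * d * (1 + M) * ((l i + 1) / (4 * d)) = 3 * (1 + M) * (l i + 1)"
      using \<open>0 < d\<close> by (simp add: field_simps)
    then show "0 \<le> l i + 3 * M + 1 \<and> l i + 3 * M + 1 \<le> 12 * d * (1 + M) * ((l i + 1) / (4 * d))"
      using assms(1)[OF \<open>i \<in> I\<close>] \<open>0 \<le> M\<close> by (simp add: algebra_simps)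
  qed
  also have "\<dots> = (12 * d * (1 + M)) ^ card I * (\<Prod>i\<in>I. (l i + 1) / (4 * d))"
    by (simp only: prod.distrib[of "\<lambda>_. 12 * d * (1 + M)"] prod_constant)
  finally show ?thesis .
qed

lemma hmeasure_cover_box_le:
  fixes z :: "real^'n" and m :: 'n and r M t :: real
  defines "b \<equiv> coord_sum z - r" and "d \<equiv> real CARD('n)"
  assumes "CARD('n) \<ge> 2" and z: "z \<in> pos_orthant" and z_m: "\<And>i. z $ i \<le> z $ m"
    and r: "2 * d + 4 \<le> r" and b: "2 * d + 4 < b" and M: "0 \<le> M"
  shows "hmeasure (cover_box z r M m t)
           \<le> ennreal (sqrt d * exp 2 * (12 * d) ^ (CARD('n) - 1) * (1 + M) ^ (CARD('n) - 1) * exp b)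
               * mu (orthant_ball z r)"
proof -
  define l where "l i = min (z $ i) (min b r)" for i
  let ?n = "CARD('n) - 1"
  let ?Q = "\<Prod>i\<in>UNIV-{m}. (l i + 1) / (4 * d)"
  let ?K = "sqrt d * exp 2 * (12 * d) ^ ?n * (1 + M) ^ ?n * exp b"
  have d: "2 \<le> d"
    using assms(3) by (simp add: d_def)
  have l_pos: "0 < l i" for i
    using z r b d by (simp add: l_def pos_orthant_def)
  have "hmeasure (cover_box z r M m t) \<le> ennreal (sqrt d * (\<Prod>i\<in>UNIV-{m}. l i + 3 * M + 1))"
    using hmeasure_sum_box_section_le[of m "\<lambda>i. l i + 3 * M"] l_pos M
    by (simp add: cover_box_def l_def b_def d_def add.assoc less_imp_le)
  also have "\<dots> \<le> ennreal (?K * (exp (- (b + 2)) * ?Q))"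
  proof (rule ennreal_leI)
    have "(\<Prod>i\<in>UNIV-{m}. l i + 3 * M + 1) \<le> (12 * d * (1 + M)) ^ ?n * ?Q"
      using prod_shifted_le_prod_scaled[of "UNIV - {m}" l M d] l_pos M d
      by (simp add: less_imp_le card_Diff_singleton)
    also have "\<dots> = (12 * d) ^ ?n * (1 + M) ^ ?n * ?Q * (exp 2 * exp b * exp (- (b + 2)))"
      unfolding exp_add[symmetric] by (simp add: power_mult_distrib)
    finally have "sqrt d * (\<Prod>i\<in>UNIV-{m}. l i + 3 * M + 1)
        \<le> sqrt d * ((12 * d) ^ ?n * (1 + M) ^ ?n * ?Q * (exp 2 * exp b * exp (- (b + 2))))"
      using d by (intro mult_left_mono) auto
    then show "sqrt d * (\<Prod>i\<in>UNIV-{m}. l i + 3 * M + 1) \<le> ?K * (exp (- (b + 2)) * ?Q)"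
      by (simp only: mult_ac)
  qed
  also have "\<dots> = ennreal ?K * ennreal (exp (- (b + 2)) * ?Q)"
  proof (rule ennreal_mult)
    have "0 \<le> (l i + 1) / (4 * d)" for i
      using l_pos[of i] d by simp
    then show "0 \<le> exp (- (b + 2)) * ?Q"
      by (simp add: prod_nonneg)
    show "0 \<le> ?K"
      using M d by simp
  qed
  also have "\<dots> \<le> ennreal ?K * mu (orthant_ball z r)"
    using mu_orthant_ball_ge[OF assms(3) z z_m] r b
    by (intro mult_left_mono) (simp_all add: l_def b_def d_def)
  finally show ?thesis .
qed

lemma orthant_ball_section_cover:
  fixes z \<xi> :: "real^'n" and r t :: real
  defines "b \<equiv> coord_sum z - r" and "d \<equiv> real CARD('n)"
  assumes "CARD('n) \<ge> 2" and z: "z \<in> pos_orthant" and r: "2 * d + 4 \<le> r" and b: "2 * d + 4 < b"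
    and \<xi>: "\<xi> \<in> orthant_ball z r" and t: "b < t"
  shows "\<exists>P. V_parallelepiped P \<and> P \<subseteq> hplane t \<and> orthant_ball z r \<inter> hplane t \<subseteq> P \<and> hproj t \<xi> \<in> P \<and>
     hmeasure P \<le> ennreal (sqrt d * exp 2 * (12 * d) ^ (CARD('n) - 1)
                              * (1 + max (t - b) (coord_sum \<xi> - b)) ^ (CARD('n) - 1) * exp b)
                    * mu (orthant_ball z r)"
proof -
  define M where "M = max (t - b) (coord_sum \<xi> - b)"
  obtain m where z_m: "\<And>i. z $ i \<le> z $ m"
    using exists_max_nth[of z] by blast
  have "0 < M"
    using t by (simp add: M_def)
  have "0 < min (z $ i) (min b r) + 3 * M" for i
    using z r b \<open>0 < M\<close> by (simp add: pos_orthant_def d_def add_pos_pos)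
  then have "V_parallelepiped (cover_box z r M m t)"
    unfolding cover_box_def b_def[symmetric] by (intro V_parallelepiped_sum_box_section)
  moreover have "cover_box z r M m t \<subseteq> hplane t"
    by (auto simp: cover_box_def sum_box_def hplane_def)
  moreover have "orthant_ball z r \<inter> hplane t \<subseteq> cover_box z r M m t"
    using assms(3) \<open>0 < M\<close> by (intro orthant_ball_section_subset_cover_box) (auto simp: M_def b_def)
  moreover have "hproj t \<xi> \<in> cover_box z r M m t"
    using assms(3) \<xi> t by (intro hproj_in_cover_box) (auto simp: M_def b_def)
  moreover have "hmeasure (cover_box z r M m t)
      \<le> ennreal (sqrt d * exp 2 * (12 * d) ^ (CARD('n) - 1) * (1 + M) ^ (CARD('n) - 1) * exp b)
          * mu (orthant_ball z r)"
    using hmeasure_cover_box_le[OF assms(3) z z_m] r b \<open>0 < M\<close> by (simp add: b_def d_def)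
  ultimately show ?thesis
    unfolding M_def by blast
qed

theorem proposition4p1:
  assumes "CARD('n::finite) \<ge> 2"
  shows "\<exists>Cd \<ge> 2. \<exists>C > 0. \<forall>(z::real^'n) r \<xi> t.
     let b = coord_sum z - r;
         D = {y \<in> pos_orthant. norm1 (z - y) < r}
     in z \<in> pos_orthant \<longrightarrow> r \<ge> Cd \<longrightarrow> b > Cd \<longrightarrow> \<xi> \<in> D \<longrightarrow>
        b < t \<longrightarrow> t < b + 2 * r \<longrightarrow>
        (\<exists>P. V_parallelepiped P \<and> P \<subseteq> hplane t \<and> D \<inter> hplane t \<subseteq> P \<and> hproj t \<xi> \<in> P \<and>
             hmeasure P \<le> ennreal (C * (1 + max (t - b) (coord_sum \<xi> - b)) ^ (CARD('n) - 1) * exp b) * mu D)"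
proof -
  define d where "d = real CARD('n)"
  have d: "2 \<le> d"
    using assms by (simp add: d_def)
  show ?thesis
  proof (rule exI[of _ "2 * d + 4"], intro conjI exI[of _ "sqrt d * exp 2 * (12 * d) ^ (CARD('n) - 1)"])
    show "2 \<le> 2 * d + 4" "0 < sqrt d * exp 2 * (12 * d) ^ (CARD('n) - 1)"
      using d by simp_all
  qed (unfold Let_def, intro allI impI,
       rule orthant_ball_section_cover[OF assms, unfolded orthant_ball_def d_def[symmetric]])
qed

end
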